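(* Suppose UE $j$ decodes $x_{B1}$ first ($j\overset{(1)}{\to}x_{B1}$), while UE $i$ does not decode $x_{A1}$ first. Then the rate region $\mathcal{R}_{3}(\mathcal{P}_{3})\cup\mathcal{R}_{4}(\mathcal{P}_{4})$ is achievable, where $$\mathcal{R}_{3}(\mathcal{P}_{3})=\bigcup_{\mathbf{p}\in\mathcal{P}_{3}}\Big\{\mathbf{r}\in\mathbb{R}_+^4\;\Big|\; r_{i,s}\le C\Big(\tfrac{p_{i,s}}{\alpha_{i}}\Big)\ (s=1,2),\; r_{i,1}+r_{i,2}\le C\Big(\tfrac{p_{i,1}+p_{i,2}}{\alpha_{i}}\Big),\; r_{j,1}\le C\Big(\tfrac{p_{j,1}}{p_{i,2}+p_{j,2}+\alpha_{j}}\Big),\; r_{j,2}\le C\Big(\tfrac{p_{j,2}}{p_{i,2}+\alpha_{j}}\Big)\Big\},$$ $$\mathcal{R}_{4}(\mathcal{P}_{4})=\bigcup_{\mathbf{p}\in\mathcal{P}_{4}}\Big\{\mathbf{r}\in\mathbb{R}_+^4\;\Big|\; r_{i,1}\le C\Big(\tfrac{p_{i,1}}{p_{j,2}+\alpha_{i}}\Big),\; r_{i,2}\le C\Big(\tfrac{p_{i,2}}{p_{i,1}+p_{j,2}+\alpha_{i}}\Big),\; r_{j,1}\le C\Big(\tfrac{p_{j,1}}{p_{i,2}+p_{j,2}+\alpha_{j}}\Big),\; r_{j,2}\le C\Big(\tfrac{p_{j,2}}{\alpha_{j}}\Big)\Big\},$$ with $\mathcal{P}_{3}=\{\mathbf{p}\in\mathcal{P}\mid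 p_{i,1}<\alpha_{j}-\alpha_{i}\}$ and $\mathcal{P}_{4}=\mathcal{P}\setminus\mathcal{P}_{3}$. The region $\mathcal{R}_{3}(\mathcal{P}_{3})$ is achieved by the decoding orders $i\overset{(1)}{\to}x_{B2}\overset{(2)}{\to}(x_{A1},x_{A2})$ and $j\overset{(1)}{\to}x_{B1}\overset{(2)}{\to}x_{B2}$; the region $\mathcal{R}_{4}(\mathcal{P}_{4})$ is achieved by the decoding orders $i\overset{(1)}{\to}x_{A2}\overset{(2)}{\to}x_{A1}$ and $j\overset{(1)}{\to}x_{B1}\overset{(2)}{\to}x_{A2}\overset{(3)}{\to}x_{B2}$.
   Context: Two-user downlink with a single-antenna base station (BS) and user equipments UE $i$ and UE $j$. UE $i$ requests file $W_A$ and UE $j$ requests file $W_B$; each file $W_f$ is split into subfiles, and the BS transmits four independent unit-power Gaussian codewords $x_{A1},x_{A2}$ (intended for UE $i$) and $x_{B1},x_{B2}$ (intended for UE $j$) with transmit powers $p_{i,1},p_{i,2},p_{j,1},p_{j,2}\ge 0$, i.e. $x=\sqrt{p_{i,1}}x_{A1}+\sqrt{p_{i,2}}x_{A2}+\sqrt{p_{j,1}}x_{B1}+\sqrt{p_{j,2}}x_{B2}$. Power vector $\mathbf{p}=(p_{i,1},p_{i,2},p_{j,1},p_{j,2})$, feasible set $\mathcal{P}=\{\mathbf{p}\in\mathbb{R}_+^4\mid p_{i,1}+p_{i,2}+p_{j,1}+p_{j,2}\le P\}$ for a total power budget $P>0$. UE $k$ receives $y_k=h_kx+z_k$ with $z_k\sim\mathcal{CN}(0,\sigma_k^2)$;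 the effective noise variance is $\alpha_k=\sigma_k^2/|h_k|^2$, and it is assumed $0<\alpha_i<\alpha_j$. Because UE $j$ has cached the data carried by $x_{A1}$ and UE $i$ has cached the data carried by $x_{B1}$, these are removed by cache-enabled interference cancellation, so the effective received signals (after normalizing by $h_k$) are: at UE $i$, $\sqrt{p_{i,1}}x_{A1}+\sqrt{p_{i,2}}x_{A2}+\sqrt{p_{j,2}}x_{B2}$ plus Gaussian noise of variance $\alpha_i$; at UE $j$, $\sqrt{p_{i,2}}x_{A2}+\sqrt{p_{j,1}}x_{B1}+\sqrt{p_{j,2}}x_{B2}$ plus Gaussian noise of variance $\alpha_j$. $C(\Gamma)=\log_2(1+\Gamma)$. Rate vector $\mathbf{r}=(r_{i,1},r_{i,2},r_{j,1},r_{j,2})$, where $r_{i,s}$ is the rate of $x_{As}$ and $r_{j,s}$ the rate of $x_{Bs}$. Receivers perform successive interference cancellation (SIC): signals are decoded in steps, each decoded signal being subtracted before later steps and undecoded signals treated as Gaussian noise; several signals may be jointly decoded in one step (multiple-access decoding). A signal intended for the other user may be decoded and cancelled only if its rate is supported at that decoding step at the decoding user. Notation: $k\overset{(n)}{\to}x_f$ means $x_f$ is the $n$-th decoded signal at UE $k$; $k\overset{(n)}{\to}(x_f,x_{f'})$ means $x_f,x_{f'}$ are jointly decoded in the $n$-th step. A rate vector is achievable if there is a power vector in the indicated set and decoding orders under which all intended signals (and all cancelled interfering signals) are decoded reliably at those rates. *)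

theory Defs
  imports Complex_Main
begin

text \<open>The four codewords x_A1, x_A2 (intended for UE i) and x_B1, x_B2 (intended for UE j).\<close>
datatype sig = A1 | A2 | B1 | B2

definition Cap :: "real \<Rightarrow> real" where
  "Cap g = log 2 (1 + g)"

text \<open>Power vectors and rate vectors are functions sig => real:
  p A1 = p_{i,1}, p A2 = p_{i,2}, p B1 = p_{j,1}, p B2 = p_{j,2}; likewise for rates.\<close>

definition feasible_powers :: "real \<Rightarrow> (sig \<Rightarrow> real) set" where
  "feasible_powers Ptot = {p. (\<forall>s. 0 \<le> p s) \<and> p A1 + p A2 + p B1 + p B2 \<le> Ptot}"

definition P3 :: "real \<Rightarrow> real \<Rightarrow> real \<Rightarrow> (sig \<Rightarrow> real) set" where
  "P3 Ptot ai aj = {p \<in> feasible_powers Ptot. p A1 < aj - ai}"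

definition P4 :: "real \<Rightarrow> real \<Rightarrow> real \<Rightarrow> (sig \<Rightarrow> real) set" where
  "P4 Ptot ai aj = feasible_powers Ptot - P3 Ptot ai aj"

text \<open>Signals present (after cache-enabled interference cancellation) at UE i and UE j.\<close>
definition recv_i :: "sig set" where "recv_i = {A1, A2, B2}"
definition recv_j :: "sig set" where "recv_j = {A2, B1, B2}"

text \<open>SIC with joint (multiple-access) decoding steps. U is the set of not yet decoded signals present
  at the receiver (undecoded signals are treated as Gaussian noise).\<close>
fun sic_ok :: "real \<Rightarrow> (sig \<Rightarrow> real) \<Rightarrow> (sig \<Rightarrow> real) \<Rightarrow> sig set list \<Rightarrow> sig set \<Rightarrow> bool" where
  "sic_ok a p r [] U = True"
| "sic_ok a p r (S # Ss) U =
     (S \<noteq> {} \<and> S \<subseteq> U \<and>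
      (\<forall>T. T \<subseteq> S \<and> T \<noteq> {} \<longrightarrow>
          (\<Sum>s\<in>T. r s) \<le> Cap ((\<Sum>s\<in>T. p s) / ((\<Sum>s\<in>U - S. p s) + a))) \<and>
      sic_ok a p r Ss (U - S))"

definition achieved_by ::
  "real \<Rightarrow> real \<Rightarrow> (sig \<Rightarrow> real) \<Rightarrow> (sig \<Rightarrow> real) \<Rightarrow> sig set list \<Rightarrow> sig set list \<Rightarrow> bool" where
  "achieved_by ai aj p r oi oj \<longleftrightarrow>
     (\<forall>s. 0 \<le> r s) \<and>
     sic_ok ai p r oi recv_i \<and> sic_ok aj p r oj recv_j \<and>
     {A1, A2} \<subseteq> \<Union>(set oi) \<and> {B1, B2} \<subseteq> \<Union>(set oj)"

definition achievable :: "real \<Rightarrow> real \<Rightarrow> (sig \<Rightarrow> real) set \<Rightarrow> (sig \<Rightarrow> real) \<Rightarrow> bool" where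
  "achievable ai aj Q r \<longleftrightarrow> (\<exists>p\<in>Q. \<exists>oi oj. achieved_by ai aj p r oi oj)"

definition R3_of :: "real \<Rightarrow> real \<Rightarrow> (sig \<Rightarrow> real) \<Rightarrow> (sig \<Rightarrow> real) set" where
  "R3_of ai aj p = {r. (\<forall>s. 0 \<le> r s) \<and>
     r A1 \<le> Cap (p A1 / ai) \<and> r A2 \<le> Cap (p A2 / ai) \<and>
     r A1 + r A2 \<le> Cap ((p A1 + p A2) / ai) \<and>
     r B1 \<le> Cap (p B1 / (p A2 + p B2 + aj)) \<and>
     r B2 \<le> Cap (p B2 / (p A2 + aj))}"

definition R4_of :: "real \<Rightarrow> real \<Rightarrow> (sig \<Rightarrow> real) \<Rightarrow> (sig \<Rightarrow> real) set" where
  "R4_of ai aj p = {r. (\<forall>s. 0 \<le> r s) \<and>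
     r A1 \<le> Cap (p A1 / (p B2 + ai)) \<and>
     r A2 \<le> Cap (p A2 / (p A1 + p B2 + ai)) \<and>
     r B1 \<le> Cap (p B1 / (p A2 + p B2 + aj)) \<and>
     r B2 \<le> Cap (p B2 / aj)}"

definition R3 :: "real \<Rightarrow> real \<Rightarrow> real \<Rightarrow> (sig \<Rightarrow> real) set" where
  "R3 Ptot ai aj = (\<Union>p\<in>P3 Ptot ai aj. R3_of ai aj p)"

definition R4 :: "real \<Rightarrow> real \<Rightarrow> real \<Rightarrow> (sig \<Rightarrow> real) set" where
  "R4 Ptot ai aj = (\<Union>p\<in>P4 Ptot ai aj. R4_of ai aj p)"

end

theory Submission
  imports Defs
begin

text \<open>Each constraint of R3 and R4 is exactly the capacity constraint of the step where an
  intended signal is decoded, except for the cancelled interferer x_B2 at UE i (in R3) and x_A2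
  at UE j (in R4). The rate of that interferer is bounded in the region by the capacity seen at
  the other UE; since C(p / N) decreases in the interference-plus-noise level N, the condition
  p_{i,1} + alpha_i < alpha_j defining P3 (resp. its negation, defining P4) is precisely what
  makes that bound suffice at the cancelling UE.\<close>

lemma Cap_mono: "0 \<le> x \<Longrightarrow> x \<le> y \<Longrightarrow> Cap x \<le> Cap y"
  unfolding Cap_def by simp

lemma Cap_divide_antimono:
  fixes p a b :: real
  assumes "0 \<le> p" and "0 < a" and "a \<le> b"
  shows "Cap (p / b) \<le> Cap (p / a)"
  using assms by (intro Cap_mono divide_left_mono) auto

lemma sic_ok_singleton_step:
  "sic_ok a p r ({s} # Ss) U \<longleftrightarrow>
     s \<in> U \<and> r s \<le> Cap (p s / ((\<Sum>t\<in>U - {s}. p t) + a)) \<and> sic_ok a p r Ss (U - {s})"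
proof -
  have "(\<forall>T. T \<subseteq> {s} \<and> T \<noteq> {} \<longrightarrow> P T) \<longleftrightarrow> P {s}" for P :: "sig set \<Rightarrow> bool"
    by (metis subset_singletonD insert_not_empty order_refl)
  then show ?thesis by simp
qed

lemma sic_ok_pair_step:
  assumes "s \<noteq> t"
  shows "sic_ok a p r ({s, t} # Ss) U \<longleftrightarrow>
     s \<in> U \<and> t \<in> U \<and>
     r s \<le> Cap (p s / ((\<Sum>u\<in>U - {s, t}. p u) + a)) \<and>
     r t \<le> Cap (p t / ((\<Sum>u\<in>U - {s, t}. p u) + a)) \<and>
     r s + r t \<le> Cap ((p s + p t) / ((\<Sum>u\<in>U - {s, t}. p u) + a)) \<and>
     sic_ok a p r Ss (U - {s, t})"
proof -
  have subsets: "T \<subseteq> {s, t} \<and> T \<noteq> {} \<longleftrightarrow> T = {s} \<or> T = {t} \<or> T = {s, t}" for T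
    by blast
  show ?thesis
    using assms by (simp add: subsets imp_disjL all_conj_distrib)
qed

lemma achieved_by_R3_orders:
  assumes "0 < ai" and "p \<in> P3 Ptot ai aj" and "r \<in> R3_of ai aj p"
  shows "achieved_by ai aj p r [{B2}, {A1, A2}] [{B1}, {B2}]"
proof -
  from assms(2) have "\<And>s. 0 \<le> p s" and "p A1 + ai < aj"
    by (auto simp: P3_def feasible_powers_def)
  then have "Cap (p B2 / (p A2 + aj)) \<le> Cap (p B2 / (p A1 + p A2 + ai))"
    using \<open>0 < ai\<close> by (intro Cap_divide_antimono) (auto simp: add_nonneg_pos)
  then have "r B2 \<le> Cap (p B2 / (p A1 + p A2 + ai))"
    using assms(3) by (auto simp: R3_of_def)
  moreover have "recv_i - {B2} = {A1, A2}" "recv_j - {B1} = {A2, B2}" "{A2, B2} - {B2} = {A2}"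
    by (auto simp: recv_i_def recv_j_def)
  ultimately show ?thesis
    using assms(3)
    by (simp add: achieved_by_def sic_ok_singleton_step sic_ok_pair_step R3_of_def
        recv_i_def recv_j_def add.assoc del: sic_ok.simps(2))
qed

lemma achieved_by_R4_orders:
  assumes "0 < ai" and "0 < aj" and "p \<in> P4 Ptot ai aj" and "r \<in> R4_of ai aj p"
  shows "achieved_by ai aj p r [{A2}, {A1}] [{B1}, {A2}, {B2}]"
proof -
  from assms(3) have "\<And>s. 0 \<le> p s" and "aj \<le> p A1 + ai"
    by (auto simp: P4_def P3_def feasible_powers_def)
  then have "Cap (p A2 / (p A1 + p B2 + ai)) \<le> Cap (p A2 / (p B2 + aj))"
    using \<open>0 < aj\<close> by (intro Cap_divide_antimono) (auto simp: add_nonneg_pos)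
  then have "r A2 \<le> Cap (p A2 / (p B2 + aj))"
    using assms(4) by (auto simp: R4_of_def)
  moreover have "recv_i - {A2} = {A1, B2}" "recv_j - {B1} = {A2, B2}"
    by (auto simp: recv_i_def recv_j_def)
  ultimately show ?thesis
    using assms(4)
    by (simp add: achieved_by_def sic_ok_singleton_step R4_of_def
        recv_i_def recv_j_def add.assoc add.commute del: sic_ok.simps(2))
qed

theorem proposition2:
  fixes Ptot ai aj :: real
  assumes "0 < Ptot" and "0 < ai" and "ai < aj"
  shows "(\<forall>r\<in>R3 Ptot ai aj \<union> R4 Ptot ai aj. achievable ai aj (feasible_powers Ptot) r)
    \<and> (\<forall>p\<in>P3 Ptot ai aj. \<forall>r\<in>R3_of ai aj p.
          achieved_by ai aj p r [{B2}, {A1, A2}] [{B1}, {B2}])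
    \<and> (\<forall>p\<in>P4 Ptot ai aj. \<forall>r\<in>R4_of ai aj p.
          achieved_by ai aj p r [{A2}, {A1}] [{B1}, {A2}, {B2}])"
proof -
  have aj_pos: "0 < aj" using assms(2,3) by linarith
  have "P3 Ptot ai aj \<subseteq> feasible_powers Ptot" "P4 Ptot ai aj \<subseteq> feasible_powers Ptot"
    by (auto simp: P3_def P4_def)
  then show ?thesis
    using achieved_by_R3_orders[OF \<open>0 < ai\<close>] achieved_by_R4_orders[OF \<open>0 < ai\<close> aj_pos]
    unfolding R3_def R4_def achievable_def by blast
qed

end
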